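(* Let $\phi\in\mathrm{QJac}_{k,L}$ be such that $\mathsf T_\lambda\phi = 0$ for all $\lambda\in\mathbb Z^n$. Then for all $\begin{pmatrix}a&b\\c&d\end{pmatrix}\in SL_2(\mathbb Z)$, \[ \phi\left(\frac z{c\tau+d},\frac{a\tau+b}{c\tau+d}\right) = e\left(\frac{c\,z^TLz}{c\tau+d}\right)\sum_{\ell\ge0}\frac1{\ell!}\left(-\frac c{4\pi i}\right)^\ell(c\tau+d)^{k-\ell}\,\mathsf T_q^\ell\phi(z,\tau). \]
   Context: Notation: $e(x) = \exp(2\pi ix)$, $q = e(\tau)$, $\tau\in\mathbb H$, $z\in\mathbb C^n$; $L$ is a rational symmetric $n\times n$ matrix with $2L$ integral with even diagonal. Let $\nu = 1/(8\pi\mathrm{Im}\tau)$ and $\alpha_i = \mathrm{Im}z_i/\mathrm{Im}\tau$. An almost holomorphic weak Jacobi form of weight $k$ and index $L$ is a finite sum $\Phi = \sum_{i,j}\phi_{i,j}(z,\tau)\nu^i\alpha^j$ ($j\in\mathbb Z_{\ge0}^n$), each $\phi_{i,j}$ holomorphic with Fourier expansion $\sum_{m\ge0}\sum_{r\in\mathbb Z^n}c(m,r)q^me(z\cdot r)$ in $|q|<1$, satisfying $\Phi(\frac z{c\tau+d},\frac{a\tau+b}{c\tau+d}) = (c\tau+d)^ke(\frac{cz^TLz}{c\tau+d})\Phi(z,\tau)$ for all $\begin{pmatrix} a&b\\c&d\end{pmatrix}\in SL_2(\mathbb Z)$ and $\Phi(z+\lambda\tau+\mu,\tau) = e(-\lambda^TL\lambda\tau-2\lambda^TLz)\Phi(z,\tau)$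 for $\lambda,\mu\in\mathbb Z^n$. A quasi-Jacobi form of weight $k$ and index $L$ is $\phi = \phi_{0,0}$ for such $\Phi$ (unique, the completion); $\mathrm{QJac}_{k,L}$ is their space. Treating $\tau,\nu,z_i,\alpha_i$ as independent variables, $\mathsf T_q\phi$ (resp. $\mathsf T_{\alpha_i}\phi$) is the quasi-Jacobi form with completion $\partial\Phi/\partial\nu$ (resp. $\partial\Phi/\partial\alpha_i$); $\mathsf T_\lambda = \sum_i\lambda_i\mathsf T_{\alpha_i}$. The sum on the right is finite. *)

theory Defs
  imports "HOL-Analysis.Analysis"
begin

definition ee :: "complex \<Rightarrow> complex" where
  "ee x = exp (2 * of_real pi * \<i> * x)"

definition uhp :: "complex set" where
  "uhp = {\<tau>. Im \<tau> > 0}"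

definition index_matrix :: "real^'n^'n \<Rightarrow> bool" where
  "index_matrix L \<longleftrightarrow> transpose L = L \<and>
     (\<forall>i j. L$i$j \<in> \<rat>) \<and> (\<forall>i j. 2 * L$i$j \<in> \<int>) \<and> (\<forall>i. L$i$i \<in> \<int>)"

definition bil :: "real^'n^'n \<Rightarrow> complex^'n \<Rightarrow> complex^'n \<Rightarrow> complex" where
  "bil L x y = (\<Sum>i\<in>UNIV. \<Sum>j\<in>UNIV. x$i * of_real (L$i$j) * y$j)"

definition ivec :: "int^'n \<Rightarrow> complex^'n" where
  "ivec v = (\<chi> i. of_int (v$i))"

definition nuf :: "complex \<Rightarrow> real" where
  "nuf \<tau> = 1 / (8 * pi * Im \<tau>)"

definition alphaf :: "complex^'n \<Rightarrow> complex \<Rightarrow> 'n \<Rightarrow> real" where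
  "alphaf z \<tau> i = Im (z$i) / Im \<tau>"

text \<open>A family of coefficient functions phi_{i,j}(z,tau), i a natural number, j a multi-index
  in Z_{>=0}^n; this represents the formal expression sum phi_{i,j} nu^i alpha^j.\<close>
type_synonym 'n family = "nat \<Rightarrow> ('n \<Rightarrow> nat) \<Rightarrow> complex^'n \<Rightarrow> complex \<Rightarrow> complex"

definition fsupp :: "'n family \<Rightarrow> (nat \<times> ('n \<Rightarrow> nat)) set" where
  "fsupp \<Phi> = {(i, j). \<exists>z \<tau>. \<tau> \<in> uhp \<and> \<Phi> i j z \<tau> \<noteq> 0}"

definition feval :: "('n::finite) family \<Rightarrow> complex^'n \<Rightarrow> complex \<Rightarrow> complex" where
  "feval \<Phi> z \<tau> = (\<Sum>(i, j)\<in>fsupp \<Phi>. \<Phi> i j z \<tau> * of_real (nuf \<tau>) ^ i *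
       (\<Prod>l\<in>UNIV. of_real (alphaf z \<tau> l) ^ j l))"

text \<open>Holomorphic on C^n x H: jointly continuous and holomorphic in each variable separately
  (equivalent to holomorphy by Osgood's lemma).\<close>
definition holo_CnH :: "(complex^'n \<Rightarrow> complex \<Rightarrow> complex) \<Rightarrow> bool" where
  "holo_CnH f \<longleftrightarrow> continuous_on (UNIV \<times> uhp) (\<lambda>(z, \<tau>). f z \<tau>) \<and>
     (\<forall>z. (\<lambda>\<tau>. f z \<tau>) holomorphic_on uhp) \<and>
     (\<forall>z. \<forall>\<tau>\<in>uhp. \<forall>i. (\<lambda>w. f (\<chi> l. if l = i then w else z$l) \<tau>) holomorphic_on UNIV)"

text \<open>Fourier expansion sum_{m>=0} sum_{r in Z^n} c(m,r) q^m e(z.r), q = e(tau),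
  converging on H (for holomorphic periodic functions this is absolute convergence).\<close>
definition has_weak_fourier :: "(complex^'n \<Rightarrow> complex \<Rightarrow> complex) \<Rightarrow> bool" where
  "has_weak_fourier f \<longleftrightarrow> (\<exists>c :: nat \<Rightarrow> int^'n \<Rightarrow> complex. \<forall>z. \<forall>\<tau>\<in>uhp.
     ((\<lambda>(m, r). c m r * ee \<tau> ^ m * ee (\<Sum>l\<in>UNIV. z$l * of_int (r$l))) has_sum f z \<tau>) UNIV)"

definition ahwjf :: "int \<Rightarrow> real^'n^'n \<Rightarrow> ('n::finite) family \<Rightarrow> bool" where
  "ahwjf k L \<Phi> \<longleftrightarrow>
     finite (fsupp \<Phi>) \<and>
     (\<forall>i j. holo_CnH (\<Phi> i j) \<and> has_weak_fourier (\<Phi> i j)) \<and>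
     (\<forall>a b c d :: int. a * d - b * c = 1 \<longrightarrow> (\<forall>z. \<forall>\<tau>\<in>uhp.
        feval \<Phi> (\<chi> l. z$l / (of_int c * \<tau> + of_int d)) ((of_int a * \<tau> + of_int b) / (of_int c * \<tau> + of_int d))
        = (of_int c * \<tau> + of_int d) powi k * ee (of_int c * bil L z z / (of_int c * \<tau> + of_int d))
          * feval \<Phi> z \<tau>)) \<and>
     (\<forall>v w :: int^'n. \<forall>z. \<forall>\<tau>\<in>uhp.
        feval \<Phi> (\<chi> l. z$l + of_int (v$l) * \<tau> + of_int (w$l)) \<tau>
        = ee (- bil L (ivec v) (ivec v) * \<tau> - 2 * bil L (ivec v) z) * feval \<Phi> z \<tau>)"

definition cterm :: "'n family \<Rightarrow> complex^'n \<Rightarrow> complex \<Rightarrow> complex" where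
  "cterm \<Phi> = \<Phi> 0 (\<lambda>_. 0)"

definition qjac_completion :: "int \<Rightarrow> real^'n^'n \<Rightarrow> ('n::finite) family \<Rightarrow>
    (complex^'n \<Rightarrow> complex \<Rightarrow> complex) \<Rightarrow> bool" where
  "qjac_completion k L \<Phi> \<phi> \<longleftrightarrow> ahwjf k L \<Phi> \<and> cterm \<Phi> = \<phi>"

definition QJac :: "int \<Rightarrow> real^'n^'n \<Rightarrow> (complex^('n::finite) \<Rightarrow> complex \<Rightarrow> complex) set" where
  "QJac k L = {\<phi>. \<exists>\<Phi>. qjac_completion k L \<Phi> \<phi>}"

text \<open>Formal partial derivatives d/dnu and d/dalpha_l on families (treating nu, alpha as
  independent variables).\<close>
definition dnu :: "'n family \<Rightarrow> 'n family" where
  "dnu \<Phi> i j = (\<lambda>z \<tau>. of_nat (i + 1) * \<Phi> (i + 1) j z \<tau>)"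

definition dalpha :: "'n \<Rightarrow> 'n family \<Rightarrow> 'n family" where
  "dalpha l \<Phi> i j = (\<lambda>z \<tau>. of_nat (j l + 1) * \<Phi> i (j(l := j l + 1)) z \<tau>)"

definition dlambda :: "int^'n \<Rightarrow> ('n::finite) family \<Rightarrow> 'n family" where
  "dlambda v \<Phi> i j = (\<lambda>z \<tau>. \<Sum>l\<in>UNIV. of_int (v$l) * dalpha l \<Phi> i j z \<tau>)"

text \<open>If phi has completion Phi, then T_q^l phi = cterm (dnu^l Phi) and
  T_lambda phi = cterm (dlambda lambda Phi).\<close>
definition Tq_pow :: "nat \<Rightarrow> 'n family \<Rightarrow> complex^'n \<Rightarrow> complex \<Rightarrow> complex" where
  "Tq_pow m \<Phi> = cterm ((dnu ^^ m) \<Phi>)"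

definition Tlam :: "int^'n \<Rightarrow> ('n::finite) family \<Rightarrow> complex^'n \<Rightarrow> complex \<Rightarrow> complex" where
  "Tlam v \<Phi> = cterm (dlambda v \<Phi>)"

end

(* Write the completion as P(z, \<tau>, \<nu>, \<alpha>) = \<Sum> \<phi>\<^sub>i\<^sub>,\<^sub>j(z, \<tau>) \<nu>^i \<alpha>^j with \<nu>, \<alpha> independent
   variables.  Since \<nu> and \<alpha> are algebraically independent over holomorphic functions, the
   elliptic and modular transformation laws of the completion hold as identities of polynomials
   in \<nu> and \<alpha>.  The hypothesis T\<^sub>\<lambda>\<phi> = 0 says that the coefficients \<phi>\<^sub>0\<^sub>,\<^sub>e\<^sub>l vanish.  The modular law
   maps \<nu> = -c/(4\<pi>i(c\<tau>+d)), \<alpha> = cz/(c\<tau>+d) to the origin, so differentiating it there shows that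
   \<partial>P/\<partial>\<alpha>\<^sub>l vanishes at these points; the elliptic law spreads this over a lattice of \<alpha>'s, and
   letting d vary gives infinitely many \<nu>'s.  Hence P does not depend on \<alpha>, and the modular law
   at that point reads \<phi>(\<gamma>(z, \<tau>)) = (c\<tau>+d)^k e(c z\<^sup>TLz/(c\<tau>+d)) P(z, \<tau>, -c/(4\<pi>i(c\<tau>+d)), 0),
   whose expansion in \<nu> is the stated series because T\<^sub>q\<^sup>m\<phi> = m! \<phi>\<^sub>m\<^sub>,\<^sub>0. *)

theory Submission
  imports Defs "HOL-Complex_Analysis.Conformal_Mappings" "HOL-Computational_Algebra.Polynomial"
begin

lemma norm_ee: "norm (ee x) = exp (- 2 * pi * Im x)"
  by (simp add: ee_def norm_exp_eq_Re)

lemma ee_nonzero: "ee x \<noteq> 0"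
  by (simp add: ee_def)

lemma holomorphic_on_ee [holomorphic_intros]:
  "f holomorphic_on A \<Longrightarrow> (\<lambda>x. ee (f x)) holomorphic_on A"
  unfolding ee_def by (intro holomorphic_intros)

lemma summable_on_sum:
  fixes f :: "'b \<Rightarrow> 'a \<Rightarrow> 'c::{topological_comm_monoid_add, t2_space}"
  assumes "finite B" "\<And>b. b \<in> B \<Longrightarrow> f b summable_on A"
  shows "(\<lambda>x. \<Sum>b\<in>B. f b x) summable_on A"
  using assms by (induction B rule: finite_induct) (auto intro: summable_on_add)

lemma exp_le_exp_endpoints:
  fixes a y y0 :: real
  assumes "\<bar>y - y0\<bar> \<le> 1"
  shows "exp (a * y) \<le> exp (a * (y0 - 1)) + exp (a * (y0 + 1))"
proof -
  have "a * y \<le> a * (y0 - 1) \<or> a * y \<le> a * (y0 + 1)"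
    using assms by (cases "a \<ge> 0") (auto simp: abs_le_iff intro: mult_left_mono mult_left_mono_neg)
  then show ?thesis
    using exp_ge_zero[of "a * (y0 - 1)"] exp_ge_zero[of "a * (y0 + 1)"] by (smt (verit) exp_le_cancel_iff)
qed

definition fourier_term ::
    "(nat \<Rightarrow> int^'n \<Rightarrow> complex) \<Rightarrow> nat \<times> (int^'n) \<Rightarrow> complex^'n::finite \<Rightarrow> complex \<Rightarrow> complex" where
  "fourier_term c x z \<tau> = c (fst x) (snd x) * ee \<tau> ^ fst x * ee (\<Sum>l\<in>UNIV. z$l * of_int (snd x $ l))"

lemma has_weak_fourier_iff:
  "has_weak_fourier f \<longleftrightarrow>
     (\<exists>c. \<forall>z. \<forall>\<tau>\<in>uhp. ((\<lambda>x. fourier_term c x z \<tau>) has_sum f z \<tau>) UNIV)"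
  by (simp add: has_weak_fourier_def fourier_term_def case_prod_unfold)

lemma holomorphic_on_fourier_term [holomorphic_intros]:
  assumes "\<And>l. (\<lambda>t. g t $ l) holomorphic_on A" "h holomorphic_on A"
  shows "(\<lambda>t. fourier_term c x (g t) (h t)) holomorphic_on A"
  unfolding fourier_term_def by (intro holomorphic_intros assms)

lemma norm_fourier_term:
  "norm (fourier_term c x z \<tau>) = norm (c (fst x) (snd x)) * exp (- 2 * pi * Im \<tau>) ^ fst x *
     (\<Prod>l\<in>UNIV. exp (- 2 * pi * of_int (snd x $ l) * Im (z$l)))"
proof -
  have "norm (ee (\<Sum>l\<in>UNIV. z$l * of_int (snd x $ l))) =
      exp (\<Sum>l\<in>UNIV. - 2 * pi * of_int (snd x $ l) * Im (z$l))"
    by (simp add: norm_ee Im_sum sum_distrib_left algebra_simps)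
  then show ?thesis
    by (simp add: fourier_term_def norm_mult norm_power norm_ee exp_sum)
qed

text \<open>Each term of a Fourier expansion is dominated, on a horizontal slab, by the sum of its
  absolute values at the \<open>2\<^sup>n\<close> corners of the slab.\<close>

definition slab_corner :: "('n \<Rightarrow> real) \<Rightarrow> 'n set \<Rightarrow> complex^'n" where
  "slab_corner w B = (\<chi> l. \<i> * of_real (if l \<in> B then w l - 1 else w l + 1))"

lemma norm_fourier_term_le_corners:
  fixes z :: "complex^'n::finite"
  assumes "Im \<tau> \<ge> y" and "\<And>l. \<bar>Im (z$l) - w l\<bar> \<le> 1"
  shows "norm (fourier_term c x z \<tau>) \<le>
    (\<Sum>B\<in>Pow UNIV. norm (fourier_term c x (slab_corner w B) (\<i> * of_real y)))"
proof -
  define e where "e = (\<lambda>l s. exp (- 2 * pi * of_int (snd x $ l) * s))"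
  define C where "C = norm (c (fst x) (snd x)) * exp (- 2 * pi * y) ^ fst x"
  have corner: "norm (fourier_term c x (slab_corner w B) (\<i> * of_real y)) =
      C * ((\<Prod>l\<in>B. e l (w l - 1)) * (\<Prod>l\<in>UNIV-B. e l (w l + 1)))" for B
  proof -
    have "(\<Prod>l\<in>UNIV. e l (Im (slab_corner w B $ l))) =
        (\<Prod>l\<in>B. e l (Im (slab_corner w B $ l))) * (\<Prod>l\<in>UNIV-B. e l (Im (slab_corner w B $ l)))"
      using prod.subset_diff[of B UNIV] by (simp add: mult.commute)
    also have "\<dots> = (\<Prod>l\<in>B. e l (w l - 1)) * (\<Prod>l\<in>UNIV-B. e l (w l + 1))"
      by (intro arg_cong2[where f = "(*)"] prod.cong) (auto simp: slab_corner_def)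
    finally show ?thesis
      by (simp add: norm_fourier_term C_def e_def)
  qed
  have "exp (- 2 * pi * Im \<tau>) ^ fst x \<le> exp (- 2 * pi * y) ^ fst x"
    using assms(1) by (intro power_mono) auto
  moreover have "(\<Prod>l\<in>UNIV. e l (Im (z$l))) \<le> (\<Prod>l\<in>UNIV. e l (w l - 1) + e l (w l + 1))"
  proof (intro prod_mono conjI)
    fix l
    show "e l (Im (z$l)) \<le> e l (w l - 1) + e l (w l + 1)"
      unfolding e_def by (rule exp_le_exp_endpoints[OF assms(2)])
  qed (simp add: e_def)
  ultimately have "norm (fourier_term c x z \<tau>) \<le> C * (\<Prod>l\<in>UNIV. e l (w l - 1) + e l (w l + 1))"
    unfolding norm_fourier_term C_def e_def by (intro mult_mono) (auto intro: prod_nonneg)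
  also have "\<dots> = (\<Sum>B\<in>Pow UNIV. norm (fourier_term c x (slab_corner w B) (\<i> * of_real y)))"
    by (simp add: prod_add corner sum_distrib_left)
  finally show ?thesis .
qed

lemma fourier_comp_uniform_limit:
  fixes g :: "'a \<Rightarrow> complex^'n::finite"
  assumes f: "\<And>z \<tau>. \<tau> \<in> uhp \<Longrightarrow> ((\<lambda>x. fourier_term c x z \<tau>) has_sum f z \<tau>) UNIV"
    and "y > 0" and "\<And>t. t \<in> K \<Longrightarrow> Im (h t) \<ge> y"
    and "\<And>t l. t \<in> K \<Longrightarrow> \<bar>Im (g t $ l) - w l\<bar> \<le> 1"
  shows "uniform_limit K (\<lambda>F t. \<Sum>x\<in>F. fourier_term c x (g t) (h t)) (\<lambda>t. f (g t) (h t))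
    (finite_subsets_at_top UNIV)"
proof (rule Weierstrass_m_test_general')
  show "norm (fourier_term c x (g t) (h t)) \<le>
      (\<Sum>B\<in>Pow UNIV. norm (fourier_term c x (slab_corner w B) (\<i> * of_real y)))" if "t \<in> K" for x t
    using that assms(3,4) by (intro norm_fourier_term_le_corners) auto
  show "((\<lambda>x. fourier_term c x (g t) (h t)) has_sum f (g t) (h t)) UNIV" if "t \<in> K" for t
    using that assms(2,3) by (intro f) (force simp: uhp_def)
  have "\<i> * of_real y \<in> uhp"
    using \<open>y > 0\<close> by (simp add: uhp_def)
  then have "(\<lambda>x. fourier_term c x (slab_corner w B) (\<i> * of_real y)) summable_on UNIV" for B
    using f summable_on_def by blast
  then show "(\<lambda>x. \<Sum>B\<in>Pow UNIV. norm (fourier_term c x (slab_corner w B) (\<i> * of_real y))) summable_on UNIV"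
    by (intro summable_on_sum) (auto simp: summable_on_iff_abs_summable_on_complex)
qed

lemma holomorphic_exists_cball_in_slab:
  fixes g :: "complex \<Rightarrow> complex^'n::finite"
  assumes A: "open A" and g: "\<And>l. (\<lambda>t. g t $ l) holomorphic_on A" and h: "h holomorphic_on A"
    and t0: "t0 \<in> A" and "Im (h t0) > 0"
  obtains r where "r > 0" and "\<And>t. t \<in> cball t0 r \<Longrightarrow>
    t \<in> A \<and> Im (h t) \<ge> Im (h t0) / 2 \<and> (\<forall>l. \<bar>Im (g t $ l) - Im (g t0 $ l)\<bar> \<le> 1)"
proof -
  define y where "y = Im (h t0) / 2"
  have "y > 0"
    using \<open>Im (h t0) > 0\<close> by (simp add: y_def)
  have "isCont h t0" "\<And>l. isCont (\<lambda>t. g t $ l) t0"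
    using h g A t0 by (meson holomorphic_on_imp_continuous_on continuous_on_eq_continuous_at)+
  then have h_lim: "((\<lambda>t. Im (h t)) \<longlongrightarrow> Im (h t0)) (at t0)"
    and g_lim: "((\<lambda>t. Im (g t $ l)) \<longlongrightarrow> Im (g t0 $ l)) (at t0)" for l
    unfolding isCont_def by (auto intro: tendsto_Im)
  define P where "P t \<longleftrightarrow> t \<in> A \<and> Im (h t) \<ge> y \<and> (\<forall>l. \<bar>Im (g t $ l) - Im (g t0 $ l)\<bar> \<le> 1)" for t
  have "\<forall>\<^sub>F t in at t0. dist (Im (h t)) (Im (h t0)) < y"
    using h_lim \<open>y > 0\<close> by (rule tendstoD)
  moreover have "\<forall>\<^sub>F t in at t0. \<forall>l. dist (Im (g t $ l)) (Im (g t0 $ l)) < 1"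
    by (rule eventually_all_finite, rule tendstoD[OF g_lim]) simp
  moreover have "\<forall>\<^sub>F t in at t0. t \<in> A"
    using A t0 eventually_at_topological by blast
  ultimately have "\<forall>\<^sub>F t in at t0. P t"
  proof eventually_elim
    case (elim t)
    have "Im (h t) \<ge> y"
      using elim(1) unfolding y_def dist_real_def by linarith
    moreover have "\<forall>l. \<bar>Im (g t $ l) - Im (g t0 $ l)\<bar> \<le> 1"
      using elim(2) by (simp add: dist_real_def less_imp_le)
    ultimately show ?case
      using elim(3) by (simp add: P_def)
  qed
  then obtain d where "d > 0" and d: "\<And>t. t \<noteq> t0 \<Longrightarrow> dist t t0 < d \<Longrightarrow> P t"
    unfolding eventually_at by blast
  have "P t0"
    using t0 \<open>y > 0\<close> by (simp add: P_def y_def)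
  then have "\<And>t. dist t t0 < d \<Longrightarrow> P t"
    using d by metis
  then show ?thesis
    using \<open>d > 0\<close> by (intro that[of "d / 2"]) (auto simp: dist_commute P_def y_def)
qed

lemma has_weak_fourier_holomorphic_comp:
  fixes f :: "complex^'n::finite \<Rightarrow> complex \<Rightarrow> complex"
  assumes "has_weak_fourier f" and A: "open A"
    and g: "\<And>l. (\<lambda>t. g t $ l) holomorphic_on A" and h: "h holomorphic_on A"
    and hA: "\<And>t. t \<in> A \<Longrightarrow> h t \<in> uhp"
  shows "(\<lambda>t. f (g t) (h t)) holomorphic_on A"
proof -
  obtain c where c: "\<And>z \<tau>. \<tau> \<in> uhp \<Longrightarrow> ((\<lambda>x. fourier_term c x z \<tau>) has_sum f z \<tau>) UNIV"
    using assms(1) unfolding has_weak_fourier_iff by blast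
  have "\<exists>r>0. (\<lambda>t. f (g t) (h t)) holomorphic_on ball t0 r" if t0: "t0 \<in> A" for t0
  proof -
    have "Im (h t0) > 0"
      using hA[OF t0] by (simp add: uhp_def)
    then obtain r where "r > 0" and K: "\<And>t. t \<in> cball t0 r \<Longrightarrow>
        t \<in> A \<and> Im (h t) \<ge> Im (h t0) / 2 \<and> (\<forall>l. \<bar>Im (g t $ l) - Im (g t0 $ l)\<bar> \<le> 1)"
      using holomorphic_exists_cball_in_slab[OF A g h t0] by blast
    have lim: "uniform_limit (cball t0 r) (\<lambda>F t. \<Sum>x\<in>F. fourier_term c x (g t) (h t))
        (\<lambda>t. f (g t) (h t)) (finite_subsets_at_top UNIV)"
      using K \<open>Im (h t0) > 0\<close> by (intro fourier_comp_uniform_limit[OF c, of "Im (h t0) / 2"]) auto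
    have "(\<lambda>t. \<Sum>x\<in>F. fourier_term c x (g t) (h t)) holomorphic_on cball t0 r" for F
      using K by (intro holomorphic_intros holomorphic_on_subset[OF g] holomorphic_on_subset[OF h]) auto
    then have "\<forall>\<^sub>F F in finite_subsets_at_top UNIV.
        continuous_on (cball t0 r) (\<lambda>t. \<Sum>x\<in>F. fourier_term c x (g t) (h t)) \<and>
        (\<lambda>t. \<Sum>x\<in>F. fourier_term c x (g t) (h t)) holomorphic_on ball t0 r"
      by (intro always_eventually allI conjI holomorphic_on_imp_continuous_on)
         (blast intro: holomorphic_on_subset[OF _ ball_subset_cball])+
    then obtain "(\<lambda>t. f (g t) (h t)) holomorphic_on ball t0 r"
      using holomorphic_uniform_limit[OF _ lim] by auto
    then show ?thesis
      using \<open>r > 0\<close> by blast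
  qed
  then show ?thesis
    using A by (force simp: holomorphic_on_open field_differentiable_def[symmetric]
        dest: holomorphic_on_imp_differentiable_at[rotated 2])
qed

lemma SL2_denom_nonzero:
  assumes "a * d - b * c = (1::int)" "\<tau> \<in> uhp"
  shows "of_int c * \<tau> + of_int d \<noteq> 0"
proof
  assume denom: "of_int c * \<tau> + of_int d = 0"
  have "of_int c * Im \<tau> = 0"
    using arg_cong[OF denom, of Im] by simp
  then have "c = 0"
    using assms(2) by (simp add: uhp_def)
  with denom assms(1) show False
    by simp
qed

lemma Im_SL2_moebius:
  assumes "a * d - b * c = (1::int)"
  shows "Im ((of_int a * \<tau> + of_int b) / (of_int c * \<tau> + of_int d)) =
    Im \<tau> / (cmod (of_int c * \<tau> + of_int d))\<^sup>2"
proof -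
  have "Im (of_int a * \<tau> + of_int b) * Re (of_int c * \<tau> + of_int d) -
      Re (of_int a * \<tau> + of_int b) * Im (of_int c * \<tau> + of_int d) = Im \<tau> * of_int (a * d - b * c)"
    by (simp add: algebra_simps)
  then show ?thesis
    using assms by (simp add: Im_divide')
qed

lemma SL2_moebius_in_uhp:
  assumes "a * d - b * c = (1::int)" "\<tau> \<in> uhp"
  shows "(of_int a * \<tau> + of_int b) / (of_int c * \<tau> + of_int d) \<in> uhp"
  using Im_SL2_moebius[OF assms(1), of \<tau>] SL2_denom_nonzero[OF assms] assms(2)
  by (simp add: uhp_def)

text \<open>Both laws are affine in \<open>\<nu>\<close> and \<open>\<alpha>\<close>, which is what lets the transformation law of a
  completion be restated for independent variables \<open>\<nu>\<close> and \<open>\<alpha>\<close>.\<close>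

lemma nuf_SL2_moebius:
  assumes "a * d - b * c = (1::int)" "\<tau> \<in> uhp"
  shows "complex_of_real (nuf ((of_int a * \<tau> + of_int b) / (of_int c * \<tau> + of_int d))) =
    (of_int c * \<tau> + of_int d)\<^sup>2 * of_real (nuf \<tau>) + of_int c * (of_int c * \<tau> + of_int d) / (4 * of_real pi * \<i>)"
proof -
  obtain u v where D: "of_int c * \<tau> + of_int d = Complex u v"
    using complex.exhaust_sel by blast
  have "Im \<tau> > 0"
    using assms(2) by (simp add: uhp_def)
  moreover have "v = of_int c * Im \<tau>"
    using arg_cong[OF D, of Im] by simp
  moreover have "(cmod (of_int c * \<tau> + of_int d))\<^sup>2 = u\<^sup>2 + v\<^sup>2"
    by (simp add: D cmod_power2)
  ultimately show ?thesis
    unfolding nuf_def Im_SL2_moebius[OF assms(1)] unfolding D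
    by (simp add: complex_eq_iff field_simps power2_eq_square)
qed

lemma alphaf_SL2_moebius:
  assumes "a * d - b * c = (1::int)" "\<tau> \<in> uhp"
  shows "complex_of_real (alphaf (\<chi> l. z$l / (of_int c * \<tau> + of_int d))
      ((of_int a * \<tau> + of_int b) / (of_int c * \<tau> + of_int d)) l) =
    (of_int c * \<tau> + of_int d) * of_real (alphaf z \<tau> l) - of_int c * z$l"
proof -
  have "Im \<tau> > 0"
    using assms(2) by (simp add: uhp_def)
  moreover have "cmod (of_int c * \<tau> + of_int d) \<noteq> 0"
    using SL2_denom_nonzero[OF assms] by simp
  ultimately have "alphaf (\<chi> l. z$l / (of_int c * \<tau> + of_int d))
      ((of_int a * \<tau> + of_int b) / (of_int c * \<tau> + of_int d)) l =
    (Im (z$l) * (of_int c * Re \<tau> + of_int d) - Re (z$l) * (of_int c * Im \<tau>)) / Im \<tau>"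
    unfolding alphaf_def Im_SL2_moebius[OF assms(1)] by (simp add: Im_divide' field_simps)
  with \<open>Im \<tau> > 0\<close> show ?thesis
    by (simp add: complex_eq_iff alphaf_def field_simps)
qed

lemma holomorphic_zero_on_horizontal_line:
  assumes "f holomorphic_on S" "open S" "connected S" "{w. Im w = y} \<subseteq> S"
    and "\<And>w. Im w = y \<Longrightarrow> f w = 0" and "w \<in> S"
  shows "f w = 0"
proof (rule analytic_continuation[OF assms(1-4)])
  show "\<i> * of_real y \<in> S"
    using assms(4) by auto
  show "\<i> * of_real y islimpt {w. Im w = y}"
    unfolding islimpt_approachable
  proof (intro allI impI)
    fix e :: real assume "e > 0"
    then show "\<exists>x'\<in>{w. Im w = y}. x' \<noteq> \<i> * of_real y \<and> dist x' (\<i> * of_real y) < e"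
      by (intro bexI[of _ "\<i> * of_real y + of_real (e / 2)"]) (auto simp: dist_norm complex_eq_iff)
  qed
qed (use assms in auto)

lemma entire_zero_on_pos_reals:
  assumes "f holomorphic_on UNIV" and "\<And>t::real. t > 0 \<Longrightarrow> f (of_real t) = 0"
  shows "f w = 0"
proof (rule analytic_continuation[OF assms(1) open_UNIV connected_UNIV subset_UNIV UNIV_I])
  show "(1::complex) islimpt (of_real ` {0::real<..})"
    unfolding islimpt_approachable
  proof (intro allI impI)
    fix e :: real assume e: "e > 0"
    show "\<exists>x'\<in>of_real ` {0::real<..}. x' \<noteq> (1::complex) \<and> dist x' 1 < e"
    proof (rule bexI[of _ "of_real (1 + e/2)"])
      show "complex_of_real (1 + e / 2) \<in> complex_of_real ` {0::real<..}"
        using e by (intro imageI) auto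
    qed (use e in \<open>auto simp: dist_norm\<close>)
  qed
qed (use assms in auto)

lemma open_uhp: "open uhp" and uhp_connected: "connected uhp"
  unfolding uhp_def by (auto simp: open_halfspace_Im_gt intro: convex_connected convex_halfspace_Im_gt)

definition vec_upd :: "'a^'n \<Rightarrow> 'n \<Rightarrow> 'a \<Rightarrow> 'a^'n" where
  "vec_upd v l x = (\<chi> i. if i = l then x else v$i)"

lemma vec_upd_nth: "vec_upd v l x $ i = (if i = l then x else v$i)"
  by (simp add: vec_upd_def)

lemma vec_upd_same [simp]: "vec_upd v l x $ l = x"
  and vec_upd_other [simp]: "i \<noteq> l \<Longrightarrow> vec_upd v l x $ i = v$i"
  and vec_upd_triv [simp]: "vec_upd v l (v$l) = v"
  by (auto simp: vec_upd_def vec_eq_iff)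

lemma holomorphic_on_vec_upd_nth:
  "f holomorphic_on A \<Longrightarrow> (\<lambda>x. vec_upd v l (f x) $ i) holomorphic_on A"
  by (cases "i = l") (auto intro: holomorphic_intros)

lemma vec_coordinatewise_induct:
  fixes P :: "'a^'n::finite \<Rightarrow> bool"
  assumes base: "\<And>v. (\<And>l. v$l \<in> S l) \<Longrightarrow> P v"
    and step: "\<And>v l. (\<And>x. x \<in> S l \<Longrightarrow> P (vec_upd v l x)) \<Longrightarrow> P v"
  shows "P v"
proof -
  have "\<forall>v. (\<forall>l. l \<notin> T \<longrightarrow> v$l \<in> S l) \<longrightarrow> P v" if "finite T" for T
    using that
  proof (induction T rule: finite_induct)
    case empty
    then show ?case
      using base by blast
  next
    case (insert l T)
    show ?case
    proof (intro allI impI)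
      fix v assume "\<forall>i. i \<notin> insert l T \<longrightarrow> v$i \<in> S i"
      then have "P (vec_upd v l x)" if "x \<in> S l" for x
        using insert.IH that by (simp add: vec_upd_nth)
      then show "P v"
        by (rule step)
    qed
  qed
  from this[of UNIV] show ?thesis
    by simp
qed

lemma zero_if_zero_at_nuf_alphaf:
  fixes F :: "complex^'n::finite \<Rightarrow> complex \<Rightarrow> complex \<Rightarrow> complex^'n \<Rightarrow> complex"
  assumes hol_nu: "\<And>z \<tau> \<alpha>. \<tau> \<in> uhp \<Longrightarrow> (\<lambda>\<nu>. F z \<tau> \<nu> \<alpha>) holomorphic_on UNIV"
    and hol_alpha: "\<And>z \<tau> \<nu> \<alpha> l. \<tau> \<in> uhp \<Longrightarrow> (\<lambda>x. F z \<tau> \<nu> (vec_upd \<alpha> l x)) holomorphic_on UNIV"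
    and hol_tau: "\<And>z \<nu> \<alpha>. (\<lambda>\<tau>. F z \<tau> \<nu> \<alpha>) holomorphic_on uhp"
    and hol_z: "\<And>z \<tau> \<nu> \<alpha> l. \<tau> \<in> uhp \<Longrightarrow> (\<lambda>w. F (vec_upd z l w) \<tau> \<nu> \<alpha>) holomorphic_on UNIV"
    and zero: "\<And>z \<tau>. \<tau> \<in> uhp \<Longrightarrow> F z \<tau> (of_real (nuf \<tau>)) (\<chi> l. of_real (alphaf z \<tau> l)) = 0"
    and "\<tau> \<in> uhp"
  shows "F z \<tau> \<nu> \<alpha> = 0"
proof -
  have real_alpha: "F z \<tau> (of_real (nuf \<tau>)) \<alpha> = 0" if \<tau>: "\<tau> \<in> uhp" and real: "\<And>l. \<alpha>$l \<in> \<real>"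
    for z \<tau> \<alpha>
  proof (rule vec_coordinatewise_induct[where S = "\<lambda>l. {w. Im w = Re (\<alpha>$l) * Im \<tau>}"
        and P = "\<lambda>z. F z \<tau> (of_real (nuf \<tau>)) \<alpha> = 0"])
    fix z :: "complex^'n" assume z: "\<And>l. z$l \<in> {w. Im w = Re (\<alpha>$l) * Im \<tau>}"
    have "of_real (alphaf z \<tau> l) = \<alpha>$l" for l
    proof -
      have "alphaf z \<tau> l = Re (\<alpha>$l)"
        using z[of l] \<tau> by (simp add: alphaf_def uhp_def)
      then show ?thesis
        using real[of l] by (simp add: complex_is_Real_iff complex_eq_iff)
    qed
    then have "(\<chi> l. of_real (alphaf z \<tau> l)) = \<alpha>"
      by (simp add: vec_eq_iff)
    then show "F z \<tau> (of_real (nuf \<tau>)) \<alpha> = 0"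
      using zero[OF \<tau>, of z] by simp
  next
    fix z :: "complex^'n" and l
    assume line: "\<And>w. w \<in> {w. Im w = Re (\<alpha>$l) * Im \<tau>} \<Longrightarrow> F (vec_upd z l w) \<tau> (of_real (nuf \<tau>)) \<alpha> = 0"
    have "F (vec_upd z l w) \<tau> (of_real (nuf \<tau>)) \<alpha> = 0" for w
      by (rule holomorphic_zero_on_horizontal_line[OF hol_z[OF \<tau>] open_UNIV connected_UNIV subset_UNIV])
         (use line in auto)
    from this[of "z$l"] show "F z \<tau> (of_real (nuf \<tau>)) \<alpha> = 0"
      by simp
  qed
  have at_nuf: "\<forall>z. F z \<tau> (of_real (nuf \<tau>)) \<alpha> = 0" if \<tau>: "\<tau> \<in> uhp" for \<tau> \<alpha>
  proof (rule vec_coordinatewise_induct[where S = "\<lambda>_. \<real>"])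
    show "\<forall>z. F z \<tau> (of_real (nuf \<tau>)) \<alpha> = 0" if "\<And>l. \<alpha>$l \<in> \<real>" for \<alpha>
      using real_alpha[OF \<tau> that] by blast
  next
    fix \<alpha> :: "complex^'n" and l
    assume reals: "\<And>x. x \<in> \<real> \<Longrightarrow> \<forall>z. F z \<tau> (of_real (nuf \<tau>)) (vec_upd \<alpha> l x) = 0"
    have "F z \<tau> (of_real (nuf \<tau>)) (vec_upd \<alpha> l x) = 0" for z x
      by (rule entire_zero_on_pos_reals[OF hol_alpha[OF \<tau>]]) (use reals in auto)
    from this[of _ "\<alpha>$l"] show "\<forall>z. F z \<tau> (of_real (nuf \<tau>)) \<alpha> = 0"
      by simp
  qed
  have "F z \<tau> (of_real t) \<alpha> = 0" if "t > 0" for t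
  proof (rule holomorphic_zero_on_horizontal_line[OF hol_tau open_uhp uhp_connected])
    show "{w. Im w = 1 / (8 * pi * t)} \<subseteq> uhp" "\<tau> \<in> uhp"
      using \<open>t > 0\<close> \<open>\<tau> \<in> uhp\<close> by (auto simp: uhp_def)
    show "F z \<tau>' (of_real t) \<alpha> = 0" if "Im \<tau>' = 1 / (8 * pi * t)" for \<tau>'
      using at_nuf[of \<tau>' \<alpha>] that \<open>t > 0\<close> by (simp add: uhp_def nuf_def)
  qed
  then show ?thesis
    by (rule entire_zero_on_pos_reals[OF hol_nu[OF \<open>\<tau> \<in> uhp\<close>]])
qed

definition completion_poly ::
    "('n::finite) family \<Rightarrow> complex^'n \<Rightarrow> complex \<Rightarrow> complex \<Rightarrow> complex^'n \<Rightarrow> complex" where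
  "completion_poly \<Phi> z \<tau> \<nu> \<alpha> = (\<Sum>(i, j)\<in>fsupp \<Phi>. \<Phi> i j z \<tau> * \<nu> ^ i * (\<Prod>l\<in>UNIV. (\<alpha>$l) ^ j l))"

lemma feval_eq_completion_poly:
  "feval \<Phi> z \<tau> = completion_poly \<Phi> z \<tau> (of_real (nuf \<tau>)) (\<chi> l. of_real (alphaf z \<tau> l))"
  by (simp add: feval_def completion_poly_def)

lemma family_eq_0_outside_fsupp: "\<tau> \<in> uhp \<Longrightarrow> (i, j) \<notin> fsupp \<Phi> \<Longrightarrow> \<Phi> i j z \<tau> = 0"
  by (auto simp: fsupp_def)

lemma holomorphic_on_completion_poly:
  assumes "\<And>i j. (\<lambda>x. \<Phi> i j (zf x) (tf x)) holomorphic_on A" "nf holomorphic_on A"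
    "\<And>l. (\<lambda>x. af x $ l) holomorphic_on A"
  shows "(\<lambda>x. completion_poly \<Phi> (zf x) (tf x) (nf x) (af x)) holomorphic_on A"
  unfolding completion_poly_def case_prod_unfold
  by (intro holomorphic_on_sum holomorphic_on_mult holomorphic_on_power holomorphic_on_prod assms)

lemma ahwjf_finite_fsupp: "ahwjf k L \<Phi> \<Longrightarrow> finite (fsupp \<Phi>)"
  unfolding ahwjf_def by blast

lemma ahwjf_holomorphic_comp:
  assumes "ahwjf k L \<Phi>" "open A" "\<And>l. (\<lambda>t. g t $ l) holomorphic_on A" "h holomorphic_on A"
    "\<And>t. t \<in> A \<Longrightarrow> h t \<in> uhp"
  shows "(\<lambda>t. \<Phi> i j (g t) (h t)) holomorphic_on A"
  using assms by (intro has_weak_fourier_holomorphic_comp[of "\<Phi> i j"]) (auto simp: ahwjf_def)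

lemma holomorphic_on_bil:
  assumes "\<And>l. (\<lambda>t. x t $ l) holomorphic_on A" "\<And>l. (\<lambda>t. y t $ l) holomorphic_on A"
  shows "(\<lambda>t. bil L (x t) (y t)) holomorphic_on A"
  unfolding bil_def by (intro holomorphic_on_sum holomorphic_on_mult holomorphic_on_const assms)

lemma holomorphic_on_vec_lambda_nth:
  "(\<And>l. (\<lambda>x. f x l) holomorphic_on A) \<Longrightarrow> (\<lambda>x. (\<chi> l. f x l) $ i) holomorphic_on A"
  by simp

lemmas holomorphic_completion_intros =
  holomorphic_on_diff holomorphic_on_add holomorphic_on_mult holomorphic_on_const holomorphic_on_id
  holomorphic_on_ident holomorphic_on_vec_lambda_nth holomorphic_on_vec_upd_nth holomorphic_on_ee
  holomorphic_on_bil holomorphic_on_power holomorphic_on_completion_poly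

text \<open>By the identity principle the elliptic and modular transformation laws of a completion hold
  as identities of polynomials in \<open>\<nu>\<close> and \<open>\<alpha>\<close>.\<close>

lemma completion_poly_elliptic:
  fixes \<Phi> :: "('n::finite) family"
  assumes ah: "ahwjf k L \<Phi>" and \<tau>: "\<tau> \<in> uhp"
  shows "completion_poly \<Phi> (\<chi> l. z$l + of_int (v$l) * \<tau> + of_int (w$l)) \<tau> \<nu> (\<chi> l. \<alpha>$l + of_int (v$l))
      = ee (- bil L (ivec v) (ivec v) * \<tau> - 2 * bil L (ivec v) z) * completion_poly \<Phi> z \<tau> \<nu> \<alpha>"
proof -
  define F where "F = (\<lambda>z \<tau> \<nu> \<alpha>.
    completion_poly \<Phi> (\<chi> l. z$l + of_int (v$l) * \<tau> + of_int (w$l)) \<tau> \<nu> (\<chi> l. \<alpha>$l + of_int (v$l))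
      - ee (- bil L (ivec v) (ivec v) * \<tau> - 2 * bil L (ivec v) z) * completion_poly \<Phi> z \<tau> \<nu> \<alpha>)"
  have "F z \<tau> \<nu> \<alpha> = 0"
  proof (rule zero_if_zero_at_nuf_alphaf[where F = F and z = z and \<nu> = \<nu> and \<alpha> = \<alpha>, OF _ _ _ _ _ \<tau>])
    fix z :: "complex^'n" and \<tau> \<alpha> assume "\<tau> \<in> uhp"
    show "(\<lambda>\<nu>. F z \<tau> \<nu> \<alpha>) holomorphic_on UNIV"
      unfolding F_def by (intro holomorphic_completion_intros)
  next
    fix z :: "complex^'n" and \<tau> \<nu> \<alpha> l assume "\<tau> \<in> uhp"
    show "(\<lambda>x. F z \<tau> \<nu> (vec_upd \<alpha> l x)) holomorphic_on UNIV"
      unfolding F_def by (intro holomorphic_completion_intros)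
  next
    fix z :: "complex^'n" and \<nu> \<alpha>
    show "(\<lambda>\<tau>. F z \<tau> \<nu> \<alpha>) holomorphic_on uhp"
      unfolding F_def
      by (intro holomorphic_completion_intros ahwjf_holomorphic_comp[OF ah open_uhp] | simp)+
  next
    fix z :: "complex^'n" and \<tau> \<nu> \<alpha> l assume \<tau>: "\<tau> \<in> uhp"
    show "(\<lambda>w. F (vec_upd z l w) \<tau> \<nu> \<alpha>) holomorphic_on UNIV"
      unfolding F_def
      by (intro holomorphic_completion_intros ahwjf_holomorphic_comp[OF ah open_UNIV] | simp add: \<tau>)+
  next
    fix z :: "complex^'n" and \<tau> assume \<tau>: "\<tau> \<in> uhp"
    have "(\<chi> l. complex_of_real (alphaf z \<tau> l) + of_int (v$l)) =
        (\<chi> l. complex_of_real (alphaf (\<chi> l. z$l + of_int (v$l) * \<tau> + of_int (w$l)) \<tau> l))"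
      using \<tau> by (simp add: vec_eq_iff alphaf_def add_divide_distrib uhp_def)
    moreover have "feval \<Phi> (\<chi> l. z$l + of_int (v$l) * \<tau> + of_int (w$l)) \<tau>
        = ee (- bil L (ivec v) (ivec v) * \<tau> - 2 * bil L (ivec v) z) * feval \<Phi> z \<tau>"
      using ah \<tau> unfolding ahwjf_def by blast
    ultimately show "F z \<tau> (of_real (nuf \<tau>)) (\<chi> l. of_real (alphaf z \<tau> l)) = 0"
      unfolding F_def feval_eq_completion_poly by simp
  qed
  then show ?thesis
    unfolding F_def right_minus_eq .
qed

lemma completion_poly_modular:
  fixes \<Phi> :: "('n::finite) family"
  assumes ah: "ahwjf k L \<Phi>" and det: "a * d - b * c = (1::int)" and \<tau>: "\<tau> \<in> uhp"
  shows "completion_poly \<Phi> (\<chi> l. z$l / (of_int c * \<tau> + of_int d))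
      ((of_int a * \<tau> + of_int b) / (of_int c * \<tau> + of_int d))
      ((of_int c * \<tau> + of_int d)^2 * \<nu> + of_int c * (of_int c * \<tau> + of_int d) / (4 * of_real pi * \<i>))
      (\<chi> l. (of_int c * \<tau> + of_int d) * \<alpha>$l - of_int c * z$l)
    = (of_int c * \<tau> + of_int d) powi k * ee (of_int c * bil L z z / (of_int c * \<tau> + of_int d))
      * completion_poly \<Phi> z \<tau> \<nu> \<alpha>"
proof -
  define F where "F = (\<lambda>z \<tau> \<nu> \<alpha>.
    completion_poly \<Phi> (\<chi> l. z$l / (of_int c * \<tau> + of_int d))
      ((of_int a * \<tau> + of_int b) / (of_int c * \<tau> + of_int d))
      ((of_int c * \<tau> + of_int d)^2 * \<nu> + of_int c * (of_int c * \<tau> + of_int d) / (4 * of_real pi * \<i>))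
      (\<chi> l. (of_int c * \<tau> + of_int d) * \<alpha>$l - of_int c * z$l)
    - (of_int c * \<tau> + of_int d) powi k * ee (of_int c * bil L z z / (of_int c * \<tau> + of_int d))
      * completion_poly \<Phi> z \<tau> \<nu> \<alpha>)"
  have nz: "\<And>t. t \<in> uhp \<Longrightarrow> of_int c * t + of_int d \<noteq> 0"
    using SL2_denom_nonzero[OF det] by blast
  have "F z \<tau> \<nu> \<alpha> = 0"
  proof (rule zero_if_zero_at_nuf_alphaf[where F = F and z = z and \<nu> = \<nu> and \<alpha> = \<alpha>, OF _ _ _ _ _ \<tau>])
    fix z :: "complex^'n" and \<tau> \<alpha> assume "\<tau> \<in> uhp"
    show "(\<lambda>\<nu>. F z \<tau> \<nu> \<alpha>) holomorphic_on UNIV"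
      unfolding F_def by (intro holomorphic_completion_intros)
  next
    fix z :: "complex^'n" and \<tau> \<nu> \<alpha> l assume "\<tau> \<in> uhp"
    show "(\<lambda>x. F z \<tau> \<nu> (vec_upd \<alpha> l x)) holomorphic_on UNIV"
      unfolding F_def by (intro holomorphic_completion_intros)
  next
    fix z :: "complex^'n" and \<nu> \<alpha>
    show "(\<lambda>\<tau>. F z \<tau> \<nu> \<alpha>) holomorphic_on uhp"
      unfolding F_def
      by (intro holomorphic_completion_intros ahwjf_holomorphic_comp[OF ah open_uhp]
          holomorphic_on_divide holomorphic_on_power_int SL2_moebius_in_uhp[OF det] | simp add: nz)+
  next
    fix z :: "complex^'n" and \<tau> \<nu> \<alpha> l assume \<tau>: "\<tau> \<in> uhp"
    show "(\<lambda>w. F (vec_upd z l w) \<tau> \<nu> \<alpha>) holomorphic_on UNIV"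
      unfolding F_def
      by (intro holomorphic_completion_intros ahwjf_holomorphic_comp[OF ah open_UNIV] holomorphic_on_divide
          | simp add: \<tau> nz SL2_moebius_in_uhp[OF det])+
  next
    fix z :: "complex^'n" and \<tau> assume \<tau>: "\<tau> \<in> uhp"
    have "(\<chi> l. (of_int c * \<tau> + of_int d) * complex_of_real (alphaf z \<tau> l) - of_int c * z$l) =
        (\<chi> l. complex_of_real (alphaf (\<chi> l. z$l / (of_int c * \<tau> + of_int d))
          ((of_int a * \<tau> + of_int b) / (of_int c * \<tau> + of_int d)) l))"
      by (simp add: vec_eq_iff alphaf_SL2_moebius[OF det \<tau>])
    moreover note nuf_SL2_moebius[OF det \<tau>, symmetric]
    moreover have "feval \<Phi> (\<chi> l. z$l / (of_int c * \<tau> + of_int d))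
        ((of_int a * \<tau> + of_int b) / (of_int c * \<tau> + of_int d)) =
      (of_int c * \<tau> + of_int d) powi k * ee (of_int c * bil L z z / (of_int c * \<tau> + of_int d)) * feval \<Phi> z \<tau>"
      using ah \<tau> det unfolding ahwjf_def by blast
    ultimately show "F z \<tau> (of_real (nuf \<tau>)) (\<chi> l. of_real (alphaf z \<tau> l)) = 0"
      unfolding F_def feval_eq_completion_poly by simp
  qed
  then show ?thesis
    unfolding F_def right_minus_eq .
qed

definition completion_poly_dalpha ::
    "('n::finite) family \<Rightarrow> 'n \<Rightarrow> complex^'n \<Rightarrow> complex \<Rightarrow> complex \<Rightarrow> complex^'n \<Rightarrow> complex" where
  "completion_poly_dalpha \<Phi> l z \<tau> \<nu> \<alpha> = (\<Sum>(i, j)\<in>fsupp \<Phi>. \<Phi> i j z \<tau> * \<nu> ^ i *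
      (of_nat (j l) * (\<alpha>$l) ^ (j l - 1) * (\<Prod>l'\<in>UNIV-{l}. (\<alpha>$l') ^ j l')))"

lemma prod_vec_upd_power:
  fixes \<alpha> :: "'a::comm_monoid_mult^'n::finite"
  shows "(\<Prod>l'\<in>UNIV. (vec_upd \<alpha> l x $ l') ^ j l') = x ^ j l * (\<Prod>l'\<in>UNIV-{l}. (\<alpha>$l') ^ j l')"
proof -
  have "(\<Prod>l'\<in>UNIV. (vec_upd \<alpha> l x $ l') ^ j l') =
      (vec_upd \<alpha> l x $ l) ^ j l * (\<Prod>l'\<in>UNIV-{l}. (vec_upd \<alpha> l x $ l') ^ j l')"
    by (rule prod.remove) auto
  also have "(\<Prod>l'\<in>UNIV-{l}. (vec_upd \<alpha> l x $ l') ^ j l') = (\<Prod>l'\<in>UNIV-{l}. (\<alpha>$l') ^ j l')"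
    by (rule prod.cong) auto
  finally show ?thesis
    by simp
qed

lemma has_field_derivative_completion_poly:
  fixes \<Phi> :: "('n::finite) family"
  shows "((\<lambda>x. completion_poly \<Phi> z \<tau> \<nu> (vec_upd \<alpha> l x)) has_field_derivative
     completion_poly_dalpha \<Phi> l z \<tau> \<nu> (vec_upd \<alpha> l x)) (at x)"
  unfolding completion_poly_def completion_poly_dalpha_def case_prod_unfold prod_vec_upd_power
proof (rule DERIV_sum)
  fix p :: "nat \<times> ('n \<Rightarrow> nat)"
  define C where "C = \<Phi> (fst p) (snd p) z \<tau> * \<nu> ^ fst p"
  define P where "P = (\<Prod>l'\<in>UNIV-{l}. (\<alpha>$l') ^ snd p l')"
  have "(\<Prod>l'\<in>UNIV-{l}. (vec_upd \<alpha> l x $ l') ^ snd p l') = P"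
    unfolding P_def by (rule prod.cong) auto
  moreover have "((\<lambda>x. C * (x ^ snd p l * P)) has_field_derivative
      C * (of_nat (snd p l) * (1 * x ^ (snd p l - Suc 0)) * P)) (at x)"
    by (intro DERIV_cmult DERIV_cmult_right DERIV_power DERIV_ident)
  ultimately show "((\<lambda>x. \<Phi> (fst p) (snd p) z \<tau> * \<nu> ^ fst p * (x ^ snd p l * (\<Prod>l'\<in>UNIV-{l}. (\<alpha>$l') ^ snd p l')))
      has_field_derivative \<Phi> (fst p) (snd p) z \<tau> * \<nu> ^ fst p *
        (of_nat (snd p l) * vec_upd \<alpha> l x $ l ^ (snd p l - 1) *
          (\<Prod>l'\<in>UNIV-{l}. (vec_upd \<alpha> l x $ l') ^ snd p l'))) (at x)"
    by (simp add: C_def P_def mult.assoc)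
qed

lemma completion_poly_dalpha_transfer:
  assumes law: "\<And>\<alpha>. completion_poly \<Phi> z1 \<tau>1 \<nu>1 (\<chi> l'. s * \<alpha>$l' + t$l') = K * completion_poly \<Phi> z \<tau> \<nu> \<alpha>"
  shows "s * completion_poly_dalpha \<Phi> l z1 \<tau>1 \<nu>1 (\<chi> l'. s * \<alpha>$l' + t$l') =
    K * completion_poly_dalpha \<Phi> l z \<tau> \<nu> \<alpha>"
proof -
  define \<beta> where "\<beta> = (\<chi> l'. s * \<alpha>$l' + t$l')"
  have "vec_upd \<beta> l (s * y + t$l) = (\<chi> l'. s * vec_upd \<alpha> l y $ l' + t$l')" for y
    by (simp add: \<beta>_def vec_eq_iff vec_upd_nth)
  then have eq: "(\<lambda>y. completion_poly \<Phi> z1 \<tau>1 \<nu>1 (vec_upd \<beta> l (s * y + t$l))) =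
      (\<lambda>y. K * completion_poly \<Phi> z \<tau> \<nu> (vec_upd \<alpha> l y))"
    using law by simp
  have "((\<lambda>y. completion_poly \<Phi> z1 \<tau>1 \<nu>1 (vec_upd \<beta> l (s * y + t$l))) has_field_derivative
      completion_poly_dalpha \<Phi> l z1 \<tau>1 \<nu>1 (vec_upd \<beta> l (s * \<alpha>$l + t$l)) * (s * 1 + 0)) (at (\<alpha>$l))"
    by (rule DERIV_chain2[OF has_field_derivative_completion_poly])
       (intro DERIV_add DERIV_cmult DERIV_ident DERIV_const)
  moreover have "((\<lambda>y. K * completion_poly \<Phi> z \<tau> \<nu> (vec_upd \<alpha> l y)) has_field_derivative
      K * completion_poly_dalpha \<Phi> l z \<tau> \<nu> (vec_upd \<alpha> l (\<alpha>$l))) (at (\<alpha>$l))"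
    by (intro DERIV_cmult has_field_derivative_completion_poly)
  ultimately have "completion_poly_dalpha \<Phi> l z1 \<tau>1 \<nu>1 (vec_upd \<beta> l (s * \<alpha>$l + t$l)) * (s * 1 + 0) =
      K * completion_poly_dalpha \<Phi> l z \<tau> \<nu> (vec_upd \<alpha> l (\<alpha>$l))"
    using DERIV_unique eq by metis
  moreover have "vec_upd \<beta> l (s * \<alpha>$l + t$l) = \<beta>"
    by (simp add: \<beta>_def vec_eq_iff vec_upd_nth)
  ultimately show ?thesis
    by (simp add: \<beta>_def mult.commute)
qed

lemma completion_poly_dalpha_origin_eq_0:
  fixes \<Phi> :: "('n::finite) family"
  assumes "\<Phi> 0 ((\<lambda>_. 0)(l := 1)) z \<tau> = 0"
  shows "completion_poly_dalpha \<Phi> l z \<tau> 0 0 = 0"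
  unfolding completion_poly_dalpha_def
proof (rule sum.neutral, safe)
  fix i j assume "(i, j) \<in> fsupp \<Phi>"
  show "\<Phi> i j z \<tau> * 0 ^ i * (of_nat (j l) * (0 $ l) ^ (j l - 1) * (\<Prod>l'\<in>UNIV - {l}. (0 $ l') ^ j l')) = (0::complex)"
  proof (cases "i = 0 \<and> j l = 1 \<and> (\<forall>l'. l' \<noteq> l \<longrightarrow> j l' = 0)")
    case True
    then have "j = (\<lambda>_. 0)(l := 1)" by auto
    then show ?thesis using True assms by simp
  next
    case False
    then consider "i \<noteq> 0" | "j l = 0" | "j l \<ge> 2" | l' where "l' \<noteq> l" "j l' \<noteq> 0"
      by fastforce
    then show ?thesis
    proof cases
      case 3 then show ?thesis by (simp add: power_0_left)
    next
      case 4
      then have "(\<Prod>l'\<in>UNIV - {l}. (0 $ l') ^ j l') = (0::complex)"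
        by (intro prod_zero) auto
      then show ?thesis by simp
    qed auto
  qed
qed

lemma completion_poly_alpha_independent:
  fixes \<Phi> :: "('n::finite) family"
  assumes "\<And>l \<alpha>. completion_poly_dalpha \<Phi> l z \<tau> \<nu> \<alpha> = 0"
  shows "completion_poly \<Phi> z \<tau> \<nu> \<alpha> = completion_poly \<Phi> z \<tau> \<nu> 0"
proof (induction \<alpha> rule: vec_coordinatewise_induct[where S = "\<lambda>_. {0}"])
  case (1 \<alpha>)
  then have "\<alpha> = 0"
    by (simp add: vec_eq_iff)
  then show ?case
    by simp
next
  case (2 \<alpha> l)
  have "((\<lambda>x. completion_poly \<Phi> z \<tau> \<nu> (vec_upd \<alpha> l x)) has_field_derivative 0) (at x within UNIV)" for x
    using has_field_derivative_completion_poly[of \<Phi> z \<tau> \<nu> \<alpha> l x] by (simp add: assms)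
  then have "\<exists>C. \<forall>x\<in>UNIV. completion_poly \<Phi> z \<tau> \<nu> (vec_upd \<alpha> l x) = C"
    by (rule has_field_derivative_zero_constant[OF convex_UNIV])
  then obtain C where "\<And>x. completion_poly \<Phi> z \<tau> \<nu> (vec_upd \<alpha> l x) = C"
    by blast
  from this[of "\<alpha>$l"] this[of 0] show ?case
    using 2 by simp
qed

definition is_polyfun :: "('a::comm_ring_1 \<Rightarrow> 'a) \<Rightarrow> bool" where
  "is_polyfun f \<longleftrightarrow> (\<exists>p. \<forall>x. f x = poly p x)"

lemma is_polyfun_const: "is_polyfun (\<lambda>x. c)"
  unfolding is_polyfun_def by (rule exI[of _ "[:c:]"]) simp

lemma is_polyfun_ident: "is_polyfun (\<lambda>x. x)"
  unfolding is_polyfun_def by (rule exI[of _ "[:0, 1:]"]) simp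

lemma is_polyfun_add: "is_polyfun f \<Longrightarrow> is_polyfun g \<Longrightarrow> is_polyfun (\<lambda>x. f x + g x)"
  unfolding is_polyfun_def by (metis poly_add)

lemma is_polyfun_mult: "is_polyfun f \<Longrightarrow> is_polyfun g \<Longrightarrow> is_polyfun (\<lambda>x. f x * g x)"
  unfolding is_polyfun_def by (metis poly_mult)

lemma is_polyfun_power: "is_polyfun f \<Longrightarrow> is_polyfun (\<lambda>x. f x ^ n)"
  by (induction n) (auto intro: is_polyfun_const is_polyfun_mult)

lemma is_polyfun_sum:
  "finite S \<Longrightarrow> (\<And>i. i \<in> S \<Longrightarrow> is_polyfun (\<lambda>x. f x i)) \<Longrightarrow> is_polyfun (\<lambda>x. \<Sum>i\<in>S. f x i)"
  by (induction S rule: finite_induct) (auto intro: is_polyfun_const is_polyfun_add)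

lemma is_polyfun_prod:
  "finite S \<Longrightarrow> (\<And>i. i \<in> S \<Longrightarrow> is_polyfun (\<lambda>x. f x i)) \<Longrightarrow> is_polyfun (\<lambda>x. \<Prod>i\<in>S. f x i)"
  by (induction S rule: finite_induct) (auto intro: is_polyfun_const is_polyfun_mult)

lemma is_polyfun_vec_upd_nth: "is_polyfun (\<lambda>x. vec_upd v l x $ i)"
  by (cases "i = l") (auto intro: is_polyfun_const is_polyfun_ident)

lemma is_polyfun_eq_0:
  fixes f :: "'a::idom \<Rightarrow> 'a"
  assumes "is_polyfun f" and "infinite {x. f x = 0}"
  shows "f x = 0"
proof -
  obtain p where p: "\<And>x. f x = poly p x"
    using assms(1) unfolding is_polyfun_def by blast
  have "p = 0"
    using poly_roots_finite[of p] assms(2) unfolding p by blast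
  then show ?thesis
    by (simp add: p)
qed

lemma is_polyfun_zero_on_lattice:
  fixes G :: "'a::{idom, ring_char_0}^'n::finite \<Rightarrow> 'a"
  assumes poly: "\<And>\<alpha> l. is_polyfun (\<lambda>x. G (vec_upd \<alpha> l x))" and "s \<noteq> 0"
    and zero: "\<And>v::int^'n. G (\<chi> l. p$l + s * of_int (v$l)) = 0"
  shows "G \<alpha> = 0"
proof (induction \<alpha> rule: vec_coordinatewise_induct[where S = "\<lambda>l. range (\<lambda>k::int. p$l + s * of_int k)"])
  case (1 \<alpha>)
  then have "\<forall>l. \<exists>k::int. \<alpha>$l = p$l + s * of_int k"
    by (auto simp: image_iff)
  then obtain v where v: "\<And>l. \<alpha>$l = p$l + s * of_int (v l)"
    by metis
  have "\<alpha> = (\<chi> l. p$l + s * of_int ((\<chi> l. v l) $ l))"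
    by (simp add: vec_eq_iff v)
  then show ?case
    using zero[of "\<chi> l. v l"] by simp
next
  case (2 \<alpha> l)
  have "inj (\<lambda>k::int. p$l + s * of_int k)"
    using \<open>s \<noteq> 0\<close> by (auto simp: inj_on_def)
  then have "infinite (range (\<lambda>k::int. p$l + s * of_int k))"
    using finite_imageD infinite_UNIV_int by blast
  moreover have "range (\<lambda>k::int. p$l + s * of_int k) \<subseteq> {x. G (vec_upd \<alpha> l x) = 0}"
    using 2 by auto
  ultimately have "infinite {x. G (vec_upd \<alpha> l x) = 0}"
    using finite_subset by blast
  from is_polyfun_eq_0[OF poly this, of "\<alpha>$l"] show ?case
    by simp
qed

lemma is_polyfun_completion_poly_dalpha_alpha:
  "finite (fsupp \<Phi>) \<Longrightarrow> is_polyfun (\<lambda>x. completion_poly_dalpha \<Phi> l z \<tau> \<nu> (vec_upd \<alpha> l' x))"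
  unfolding completion_poly_dalpha_def case_prod_unfold
  by (intro is_polyfun_sum is_polyfun_mult is_polyfun_const is_polyfun_power is_polyfun_prod
      is_polyfun_vec_upd_nth finite)

lemma is_polyfun_completion_poly_dalpha_nu:
  "finite (fsupp \<Phi>) \<Longrightarrow> is_polyfun (\<lambda>\<nu>. completion_poly_dalpha \<Phi> l z \<tau> \<nu> \<alpha>)"
  unfolding completion_poly_dalpha_def case_prod_unfold
  by (intro is_polyfun_sum is_polyfun_mult is_polyfun_const is_polyfun_power is_polyfun_ident)

text \<open>At \<open>\<nu> = -c/(4\<pi>i(c\<tau>+d))\<close>, \<open>\<alpha> = cz/(c\<tau>+d)\<close> the modular transformation maps \<open>(\<nu>, \<alpha>)\<close> to
  the origin, where the \<open>\<alpha>\<^sub>l\<close>-derivative of the completion is the coefficient \<open>\<phi>\<^sub>0\<^sub>,\<^sub>e\<^sub>l\<close>.\<close>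

lemma completion_poly_dalpha_zero_at_SL2_point:
  assumes ah: "ahwjf k L \<Phi>" and e0: "\<And>z \<tau>. \<tau> \<in> uhp \<Longrightarrow> \<Phi> 0 ((\<lambda>_. 0)(l := 1)) z \<tau> = 0"
    and det: "a * d - b * c = (1::int)" and \<tau>: "\<tau> \<in> uhp"
  shows "completion_poly_dalpha \<Phi> l z \<tau> (- of_int c / (4 * of_real pi * \<i> * (of_int c * \<tau> + of_int d)))
    (\<chi> m. of_int c * z$m / (of_int c * \<tau> + of_int d)) = 0"
proof -
  define D where "D = of_int c * \<tau> + of_int d"
  define \<nu> where "\<nu> = - of_int c / (4 * of_real pi * \<i> * D)"
  define K where "K = D powi k * ee (of_int c * bil L z z / D)"
  define t where "t = (\<chi> m. - (of_int c * z$m))"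
  have "D \<noteq> 0"
    unfolding D_def by (rule SL2_denom_nonzero[OF det \<tau>])
  then have "D\<^sup>2 * \<nu> + of_int c * D / (4 * of_real pi * \<i>) = 0"
    by (simp add: \<nu>_def field_simps power2_eq_square)
  moreover have "(\<chi> l. D * \<alpha>$l - of_int c * z$l) = (\<chi> l. D * \<alpha>$l + t$l)" for \<alpha>
    by (simp add: t_def vec_eq_iff)
  ultimately have "completion_poly \<Phi> (\<chi> l. z$l / D) ((of_int a * \<tau> + of_int b) / D) 0 (\<chi> l. D * \<alpha>$l + t$l) =
      K * completion_poly \<Phi> z \<tau> \<nu> \<alpha>" for \<alpha>
    using completion_poly_modular[OF ah det \<tau>, of z \<nu> \<alpha>] by (simp add: D_def K_def)
  from completion_poly_dalpha_transfer[OF this]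
  have transfer: "D * completion_poly_dalpha \<Phi> l (\<chi> l. z$l / D) ((of_int a * \<tau> + of_int b) / D) 0
      (\<chi> l'. D * (\<chi> m. of_int c * z$m / D)$l' + t$l') =
    K * completion_poly_dalpha \<Phi> l z \<tau> \<nu> (\<chi> m. of_int c * z$m / D)" .
  have "(\<chi> l'. D * (\<chi> m. of_int c * z$m / D)$l' + t$l') = 0"
    using \<open>D \<noteq> 0\<close> by (simp add: t_def vec_eq_iff)
  moreover have "completion_poly_dalpha \<Phi> l (\<chi> l. z$l / D) ((of_int a * \<tau> + of_int b) / D) 0 0 = 0"
    unfolding D_def by (intro completion_poly_dalpha_origin_eq_0 e0 SL2_moebius_in_uhp[OF det \<tau>])
  ultimately have "K * completion_poly_dalpha \<Phi> l z \<tau> \<nu> (\<chi> m. of_int c * z$m / D) = 0"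
    using transfer by (simp only: mult_zero_right)
  moreover have "K \<noteq> 0"
    using \<open>D \<noteq> 0\<close> by (simp add: K_def ee_nonzero)
  ultimately have "completion_poly_dalpha \<Phi> l z \<tau> \<nu> (\<chi> m. of_int c * z$m / D) = 0"
    by simp
  then show ?thesis
    by (simp only: \<nu>_def D_def)
qed

lemma completion_poly_dalpha_elliptic:
  assumes ah: "ahwjf k L \<Phi>" and \<tau>: "\<tau> \<in> uhp"
  shows "completion_poly_dalpha \<Phi> l (\<chi> l. z$l + of_int (v$l) * \<tau> + of_int (w$l)) \<tau> \<nu> (\<chi> l. \<alpha>$l + of_int (v$l))
      = ee (- bil L (ivec v) (ivec v) * \<tau> - 2 * bil L (ivec v) z) * completion_poly_dalpha \<Phi> l z \<tau> \<nu> \<alpha>"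
proof -
  have "completion_poly \<Phi> (\<chi> l. z$l + of_int (v$l) * \<tau> + of_int (w$l)) \<tau> \<nu> (\<chi> l'. 1 * \<alpha>$l' + ivec v$l')
      = ee (- bil L (ivec v) (ivec v) * \<tau> - 2 * bil L (ivec v) z) * completion_poly \<Phi> z \<tau> \<nu> \<alpha>" for \<alpha>
    using completion_poly_elliptic[OF ah \<tau>] by (simp add: ivec_def)
  from completion_poly_dalpha_transfer[OF this] show ?thesis
    by (simp add: ivec_def)
qed

text \<open>If \<open>\<phi>\<^sub>0\<^sub>,\<^sub>e\<^sub>l\<close> vanishes, the \<open>\<alpha>\<^sub>l\<close>-derivative of the completion vanishes identically: for every
  \<open>n \<ge> 1\<close> the two previous lemmas (with \<open>(a, b, c, d) = (1, n - 1, 1, n)\<close>) make it vanish on a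
  lattice in \<open>\<alpha>\<close> at \<open>\<nu> = -1/(4\<pi>i(\<tau> + n))\<close>, and these are infinitely many values of \<open>\<nu>\<close>.\<close>

lemma completion_poly_dalpha_eq_0:
  fixes \<Phi> :: "('n::finite) family"
  assumes ah: "ahwjf k L \<Phi>" and e0: "\<And>z \<tau>. \<tau> \<in> uhp \<Longrightarrow> \<Phi> 0 ((\<lambda>_. 0)(l := 1)) z \<tau> = 0"
    and \<tau>: "\<tau> \<in> uhp"
  shows "completion_poly_dalpha \<Phi> l z \<tau> \<nu> \<alpha> = 0"
proof -
  have fin: "finite (fsupp \<Phi>)"
    by (rule ahwjf_finite_fsupp[OF ah])
  define D where "D n = \<tau> + of_int n" for n :: int
  define \<nu>' where "\<nu>' n = - 1 / (4 * of_real pi * \<i> * D n)" for n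
  have det: "1 * n - (n - 1) * 1 = (1::int)" for n
    by simp
  have D: "D n \<noteq> 0" for n
    using SL2_denom_nonzero[OF det \<tau>] by (simp add: D_def)
  have lattice: "completion_poly_dalpha \<Phi> l z \<tau> (\<nu>' n) (\<chi> m. z$m / D n + (- of_int n / D n) * of_int (v$m)) = 0"
    for n v
  proof -
    define z' where "z' = (\<chi> m. z$m + of_int (v$m) * \<tau> + of_int ((0::int^'n)$m))"
    define \<beta> where "\<beta> = (\<chi> m. z$m / D n + (- of_int n / D n) * of_int (v$m))"
    define E where "E = ee (- bil L (ivec v) (ivec v) * \<tau> - 2 * bil L (ivec v) z)"
    have "completion_poly_dalpha \<Phi> l z' \<tau> (\<nu>' n) (\<chi> m. \<beta>$m + of_int (v$m)) =
        E * completion_poly_dalpha \<Phi> l z \<tau> (\<nu>' n) \<beta>"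
      unfolding z'_def E_def by (rule completion_poly_dalpha_elliptic[OF ah \<tau>])
    moreover have "(\<chi> m. \<beta>$m + of_int (v$m)) = (\<chi> m. of_int 1 * z'$m / (of_int 1 * \<tau> + of_int n))"
    proof -
      have "z$m / D n + (- of_int n / D n) * of_int (v$m) + of_int (v$m) = (z$m + of_int (v$m) * \<tau>) / D n" for m
      proof -
        have "z$m / D n + (- of_int n / D n) * of_int (v$m) + of_int (v$m) =
            (z$m - of_int n * of_int (v$m) + of_int (v$m) * D n) / D n"
          using D[of n] by (simp add: field_simps)
        also have "z$m - of_int n * of_int (v$m) + of_int (v$m) * D n = z$m + of_int (v$m) * \<tau>"
          by (simp add: D_def algebra_simps)
        finally show ?thesis .
      qed
      then show ?thesis
        by (simp add: z'_def \<beta>_def vec_eq_iff D_def)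
    qed
    moreover have "\<nu>' n = - of_int 1 / (4 * of_real pi * \<i> * (of_int 1 * \<tau> + of_int n))"
      by (simp add: \<nu>'_def D_def)
    ultimately have "E * completion_poly_dalpha \<Phi> l z \<tau> (\<nu>' n) \<beta> = 0"
      using completion_poly_dalpha_zero_at_SL2_point[OF ah e0 det \<tau>, of z'] by simp
    then show ?thesis
      by (simp add: E_def \<beta>_def ee_nonzero)
  qed
  have at_nu': "completion_poly_dalpha \<Phi> l z \<tau> (\<nu>' n) \<alpha> = 0" if "n \<ge> 1" for n
    by (rule is_polyfun_zero_on_lattice[OF is_polyfun_completion_poly_dalpha_alpha[OF fin],
          where s = "- of_int n / D n" and p = "\<chi> m. z$m / D n"])
       (use that D[of n] lattice in auto)
  have "inj_on \<nu>' {1..}"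
    using D by (auto simp: inj_on_def \<nu>'_def D_def field_simps)
  then have "infinite (\<nu>' ` {1..})"
    using finite_imageD infinite_Icc_iff by (metis infinite_Ici)
  moreover have "\<nu>' ` {1..} \<subseteq> {\<nu>. completion_poly_dalpha \<Phi> l z \<tau> \<nu> \<alpha> = 0}"
    using at_nu' by auto
  ultimately show ?thesis
    by (intro is_polyfun_eq_0[OF is_polyfun_completion_poly_dalpha_nu[OF fin]]) (auto dest: finite_subset)
qed

lemma completion_poly_alpha_zero_has_sum:
  fixes \<Phi> :: "('n::finite) family"
  assumes fin: "finite (fsupp \<Phi>)" and \<tau>: "\<tau> \<in> uhp"
  shows "((\<lambda>m. \<Phi> m (\<lambda>_. 0) z \<tau> * \<nu> ^ m) has_sum completion_poly \<Phi> z \<tau> \<nu> 0) UNIV"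
proof (rule has_sum_finite_neutralI)
  define M where "M = {m. (m, \<lambda>_. 0) \<in> fsupp \<Phi>}"
  have "M \<subseteq> fst ` fsupp \<Phi>"
    by (force simp: M_def)
  then show "finite M"
    using fin finite_subset by blast
  show "\<Phi> m (\<lambda>_. 0) z \<tau> * \<nu> ^ m = 0" if "m \<in> UNIV - M" for m
    using that by (simp add: M_def family_eq_0_outside_fsupp[OF \<tau>])
  have "(\<Prod>l\<in>UNIV. (0::complex) ^ j l) = (if j = (\<lambda>_. 0) then 1 else 0)" for j :: "'n \<Rightarrow> nat"
    by (auto simp: fun_eq_iff intro: prod_zero)
  then have "completion_poly \<Phi> z \<tau> \<nu> 0 =
      (\<Sum>p\<in>fsupp \<Phi>. if snd p = (\<lambda>_. 0) then \<Phi> (fst p) (\<lambda>_. 0) z \<tau> * \<nu> ^ fst p else 0)"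
    unfolding completion_poly_def case_prod_unfold by (intro sum.cong) auto
  also have "\<dots> = (\<Sum>p\<in>{p\<in>fsupp \<Phi>. snd p = (\<lambda>_. 0)}. \<Phi> (fst p) (\<lambda>_. 0) z \<tau> * \<nu> ^ fst p)"
    using fin by (rule sum.inter_filter[symmetric])
  also have "{p\<in>fsupp \<Phi>. snd p = (\<lambda>_. 0)} = (\<lambda>m. (m, \<lambda>_. 0)) ` M"
    by (auto simp: M_def)
  also have "(\<Sum>p\<in>(\<lambda>m. (m, \<lambda>_. 0)) ` M. \<Phi> (fst p) (\<lambda>_. 0) z \<tau> * \<nu> ^ fst p) =
      (\<Sum>m\<in>M. \<Phi> m (\<lambda>_. 0) z \<tau> * \<nu> ^ m)"
    by (subst sum.reindex) (auto simp: inj_on_def)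
  finally show "completion_poly \<Phi> z \<tau> \<nu> 0 = (\<Sum>m\<in>M. \<Phi> m (\<lambda>_. 0) z \<tau> * \<nu> ^ m)" .
qed simp

lemma completion_poly_origin:
  fixes \<Phi> :: "('n::finite) family"
  assumes "finite (fsupp \<Phi>)" and "\<tau> \<in> uhp"
  shows "completion_poly \<Phi> z \<tau> 0 0 = cterm \<Phi> z \<tau>"
proof -
  have "((\<lambda>m. \<Phi> m (\<lambda>_. 0) z \<tau> * 0 ^ m) has_sum \<Phi> 0 (\<lambda>_. 0) z \<tau>) UNIV"
    by (rule has_sum_finite_neutralI[of "{0}"]) auto
  then show ?thesis
    using completion_poly_alpha_zero_has_sum[OF assms, of z 0] by (simp add: cterm_def has_sum_unique)
qed

lemma dnu_power: "(dnu ^^ m) \<Phi> i j z \<tau> = pochhammer (of_nat (i + 1)) m * \<Phi> (i + m) j z \<tau>"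
proof (induction m arbitrary: i)
  case 0
  then show ?case
    by simp
next
  case (Suc m)
  have "(dnu ^^ Suc m) \<Phi> i j z \<tau> = of_nat (i + 1) * (dnu ^^ m) \<Phi> (i + 1) j z \<tau>"
    by (simp add: dnu_def)
  also have "\<dots> = pochhammer (of_nat (i + 1)) (Suc m) * \<Phi> (i + Suc m) j z \<tau>"
    using Suc.IH[of "i + 1"] by (simp add: pochhammer_rec add_ac)
  finally show ?case .
qed

lemma Tq_pow_eq: "Tq_pow m \<Phi> z \<tau> = of_nat (fact m) * \<Phi> m (\<lambda>_. 0) z \<tau>"
  unfolding Tq_pow_def cterm_def dnu_power by (simp add: pochhammer_fact[symmetric])

lemma Tlam_unit_vector:
  fixes \<Phi> :: "('n::finite) family"
  shows "Tlam (\<chi> m. if m = l then 1 else 0) \<Phi> z \<tau> = \<Phi> 0 ((\<lambda>_. 0)(l := 1)) z \<tau>"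
proof -
  have "Tlam (\<chi> m. if m = l then 1 else 0) \<Phi> z \<tau> =
      (\<Sum>m\<in>UNIV. if m = l then \<Phi> 0 ((\<lambda>_. 0)(m := 1)) z \<tau> else 0)"
    unfolding Tlam_def cterm_def dlambda_def dalpha_def by (intro sum.cong) auto
  then show ?thesis
    by simp
qed

lemma Tq_pow_series_has_sum:
  fixes \<Phi> :: "('n::finite) family"
  assumes "finite (fsupp \<Phi>)" and "\<tau> \<in> uhp" and "D \<noteq> 0"
  shows "((\<lambda>m. (1 / of_nat (fact m)) * w ^ m * D powi (k - int m) * Tq_pow m \<Phi> z \<tau>) has_sum
      D powi k * completion_poly \<Phi> z \<tau> (w / D) 0) UNIV"
proof -
  have "(1 / of_nat (fact m)) * w ^ m * D powi (k - int m) * Tq_pow m \<Phi> z \<tau> =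
      D powi k * (\<Phi> m (\<lambda>_. 0) z \<tau> * (w / D) ^ m)" for m
  proof -
    have "D powi (k - int m) = D powi k / D ^ m"
      using \<open>D \<noteq> 0\<close> by (simp add: power_int_diff)
    then have "(1 / of_nat (fact m)) * w ^ m * D powi (k - int m) * Tq_pow m \<Phi> z \<tau> =
        (1 / of_nat (fact m) * of_nat (fact m)) * w ^ m * (D powi k / D ^ m) * \<Phi> m (\<lambda>_. 0) z \<tau>"
      unfolding Tq_pow_eq by (simp only: mult_ac)
    also have "\<dots> = D powi k * (\<Phi> m (\<lambda>_. 0) z \<tau> * (w / D) ^ m)"
      by (simp add: power_divide)
    finally show ?thesis .
  qed
  then show ?thesis
    using has_sum_cmult_right[OF completion_poly_alpha_zero_has_sum[OF assms(1,2)]] by simp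
qed

theorem lemma4:
  fixes k :: int and L :: "real^'n^'n" and \<Phi> :: "('n::finite) family"
    and \<phi> :: "complex^'n \<Rightarrow> complex \<Rightarrow> complex"
  assumes "index_matrix L"
    and "qjac_completion k L \<Phi> \<phi>"
    and "\<forall>v::int^'n. \<forall>z. \<forall>\<tau>\<in>uhp. Tlam v \<Phi> z \<tau> = 0"
    and "a * d - b * c = (1::int)"
    and "\<tau> \<in> uhp"
  shows "\<phi> (\<chi> l. z$l / (of_int c * \<tau> + of_int d)) ((of_int a * \<tau> + of_int b) / (of_int c * \<tau> + of_int d))
     = ee (of_int c * bil L z z / (of_int c * \<tau> + of_int d)) *
       infsum (\<lambda>m::nat. (1 / of_nat (fact m)) * (- of_int c / (4 * of_real pi * \<i>)) ^ m
          * (of_int c * \<tau> + of_int d) powi (k - int m) * Tq_pow m \<Phi> z \<tau>) UNIV"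
proof -
  have ah: "ahwjf k L \<Phi>" and \<phi>: "\<phi> = cterm \<Phi>"
    using assms(2) by (auto simp: qjac_completion_def)
  note det = assms(4) and \<tau> = assms(5) and fin = ahwjf_finite_fsupp[OF ah]
  define D where "D = of_int c * \<tau> + of_int d"
  define \<nu> where "\<nu> = - of_int c / (4 * of_real pi * \<i>) / D"
  define \<alpha> where "\<alpha> = (\<chi> l. of_int c * z$l / D)"
  have "D \<noteq> 0"
    unfolding D_def by (rule SL2_denom_nonzero[OF det \<tau>])
  then have origin: "D\<^sup>2 * \<nu> + of_int c * D / (4 * of_real pi * \<i>) = 0" "(\<chi> l. D * \<alpha>$l - of_int c * z$l) = 0"
    by (simp_all add: \<nu>_def \<alpha>_def field_simps power2_eq_square vec_eq_iff)
  have "\<Phi> 0 ((\<lambda>_. 0)(l := 1)) z' \<tau>' = 0" if "\<tau>' \<in> uhp" for l z' \<tau>'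
    using assms(3) that Tlam_unit_vector[of l \<Phi> z' \<tau>'] by metis
  then have alpha_free: "completion_poly \<Phi> z \<tau> \<nu> \<alpha> = completion_poly \<Phi> z \<tau> \<nu> 0"
    by (intro completion_poly_alpha_independent completion_poly_dalpha_eq_0[OF ah _ \<tau>])
  have "\<phi> (\<chi> l. z$l / D) ((of_int a * \<tau> + of_int b) / D) =
      completion_poly \<Phi> (\<chi> l. z$l / D) ((of_int a * \<tau> + of_int b) / D) 0 0"
    unfolding \<phi> by (rule completion_poly_origin[OF fin SL2_moebius_in_uhp[OF det \<tau>], folded D_def, symmetric])
  also have "\<dots> = D powi k * ee (of_int c * bil L z z / D) * completion_poly \<Phi> z \<tau> \<nu> \<alpha>"
    using completion_poly_modular[OF ah det \<tau>, of z \<nu> \<alpha>, folded D_def] unfolding origin .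
  also have "\<dots> = ee (of_int c * bil L z z / D) * (D powi k * completion_poly \<Phi> z \<tau> \<nu> 0)"
    by (simp only: alpha_free mult_ac)
  also have "D powi k * completion_poly \<Phi> z \<tau> \<nu> 0 = infsum (\<lambda>m::nat. (1 / of_nat (fact m)) *
      (- of_int c / (4 * of_real pi * \<i>)) ^ m * D powi (k - int m) * Tq_pow m \<Phi> z \<tau>) UNIV"
    unfolding \<nu>_def by (rule infsumI[OF Tq_pow_series_has_sum[OF fin \<tau> \<open>D \<noteq> 0\<close>], symmetric])
  finally show ?thesis
    unfolding D_def .
qed

end
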